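(* Let $\mathcal{R}=\{z\in\mathbb{C}:\Re(z)>0\}$ and let $\Phi:\mathcal{R}\to\mathbb{C}$ be analytic and satisfy: (a) for all $0<a<b<\infty$, $\lim_{y\to\pm\infty} e^{-\pi|y|}\int_a^b\left|\frac{\Phi(x+iy)}{x+iy}\right|\mathrm{d}x=0$; (b) for every $\eta>0$, $\sup_{x\ge\eta}\int_{-\infty}^\infty\left|\frac{\Phi(x+iy)}{x+iy}\right|e^{-\pi|y|}\,\mathrm{d}y<\infty$; (c) $\lim_{x\to\infty}\int_{-\infty}^\infty\left|\frac{\Phi(x+iy)}{x+iy}\right|e^{-\pi|y|}\,\mathrm{d}y=0$. For $\xi>0$ let $\mathcal{A}(\xi,\Phi;z)=\frac{\Phi(\xi)}{z-\xi}-\frac{\Phi(\xi)}{z+\xi}$. Then the sequence of entire functions $$\left(\frac{\cos\pi z}{\pi}\right)\sum_{n=1}^N(-1)^n\mathcal{A}(n-\tfrac12,\Phi;z),\qquad N=1,2,3,\dots,$$ converges uniformly on compact subsets of $\mathbb{C}$ as $N\to\infty$; hence $\mathcal{K}(\Phi,z)=\lim_{N\to\infty}\left(\frac{\cos\pi z}{\pi}\right)\sum_{n=1}^N(-1)^n\mathcal{A}(n-\tfrac12,\Phi;z)$ is an entire function. *)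

theory Defs
  imports "HOL-Analysis.Analysis"
begin

definition right_half_plane :: "complex set" where
  "right_half_plane = {z. Re z > 0}"

definition calA :: "real \<Rightarrow> (complex \<Rightarrow> complex) \<Rightarrow> complex \<Rightarrow> complex" where
  "calA \<xi> \<Phi> z = \<Phi> (complex_of_real \<xi>) / (z - complex_of_real \<xi>)
                 - \<Phi> (complex_of_real \<xi>) / (z + complex_of_real \<xi>)"

text \<open>The N-th partial expression (cos pi z / pi) * sum_{n=1}^N (-1)^n A(n - 1/2, Phi; z),
  as a formula; it has removable singularities at the half-integers.\<close>
definition partial_K :: "(complex \<Rightarrow> complex) \<Rightarrow> nat \<Rightarrow> complex \<Rightarrow> complex" where
  "partial_K \<Phi> N z = (cos (complex_of_real pi * z) / complex_of_real pi) *
      (\<Sum>n = 1..N. (-1) ^ n * calA (real n - 1/2) \<Phi> z)"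

definition vert_int :: "(complex \<Rightarrow> complex) \<Rightarrow> real \<Rightarrow> ennreal" where
  "vert_int \<Phi> x = (\<integral>\<^sup>+ y. ennreal (norm (\<Phi> (Complex x y) / Complex x y) * exp (- pi * \<bar>y\<bar>)) \<partial>lborel)"

definition horiz_int :: "(complex \<Rightarrow> complex) \<Rightarrow> real \<Rightarrow> real \<Rightarrow> real \<Rightarrow> ennreal" where
  "horiz_int \<Phi> a b y = (\<integral>\<^sup>+ x \<in> {a..b}. ennreal (norm (\<Phi> (Complex x y) / Complex x y)) \<partial>lborel)"

end

theory Submission
  imports Defs "HOL-Complex_Analysis.Complex_Analysis"
begin

text \<open>Write g(w) = Phi(w)/w and xi_n = n - 1/2. Since
  A(xi, Phi; z) = g(xi) (2 z^2 / (z^2 - xi^2) - 2), the n-th summand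
  (cos pi z / pi) (-1)^n A(xi_n, Phi; z) splits into a part of size O(n^-2), uniformly on compact
  sets, and -(2 cos pi z / pi) (-1)^n g(xi_n). Everything therefore hinges on the convergence of
  the alternating series of the (-1)^n g(xi_n).

  The function g(w) / cos(pi w) has residue (-1)^n g(xi_n) / pi at xi_n, so by the residue theorem
  a block of that series over M < n \<le> M' is 1/(2i) times the integral of g(w) / cos(pi w) around
  the rectangle [M, M'] x [-T, T]. On its vertical sides |cos(pi w)| \<ge> e^(pi |Im w|) / 2, on its
  horizontal sides |cos(pi w)| \<ge> e^(pi T) / 4. Letting T tend to infinity with (a), the block is
  bounded by the weighted vertical integrals at M and M', which tend to 0 by (c).\<close>

abbreviation cos_pi :: "complex \<Rightarrow> complex" where
  "cos_pi z \<equiv> cos (complex_of_real pi * z)"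

section \<open>Lower bounds for the cosine\<close>

lemma norm_cos_squared_sinh: "norm (cos z) ^ 2 = cos (Re z) ^ 2 + sinh (Im z) ^ 2"
  by (simp add: norm_cos_squared sinh_field_def exp_minus power_divide)

lemma abs_sinh_Im_le_norm_cos: "\<bar>sinh (Im z)\<bar> \<le> norm (cos z)"
  by (rule power2_le_imp_le) (simp_all add: norm_cos_squared_sinh)

lemma norm_cos_eq_cosh_Im:
  assumes "sin (Re z) = 0"
  shows "norm (cos z) = cosh (Im z)"
proof -
  have "cos (Re z) ^ 2 = 1" using sin_cos_squared_add[of "Re z"] assms by simp
  then have "norm (cos z) ^ 2 = cosh (Im z) ^ 2"
    by (simp add: norm_cos_squared_sinh cosh_square_eq)
  then show ?thesis by (rule power2_eq_imp_eq) simp_all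
qed

lemma exp_abs_le_cosh: "exp \<bar>y\<bar> / 2 \<le> cosh (y::real)"
  by (cases "y \<ge> 0") (simp_all add: cosh_def)

lemma exp_abs_le_abs_sinh:
  assumes "1 \<le> \<bar>y::real\<bar>"
  shows "exp \<bar>y\<bar> / 4 \<le> \<bar>sinh y\<bar>"
proof -
  have "2 \<le> exp (2 * \<bar>y\<bar>)" using exp_ge_add_one_self[of "2 * \<bar>y\<bar>"] assms by linarith
  then have "2 * exp (- \<bar>y\<bar>) \<le> exp \<bar>y\<bar>"
    by (simp add: exp_minus field_simps flip: exp_add)
  then have "exp \<bar>y\<bar> / 4 \<le> sinh \<bar>y\<bar>" by (simp add: sinh_def)
  then show ?thesis by simp
qed

lemma norm_cos_pi_vertical: "exp (pi * \<bar>y\<bar>) / 2 \<le> norm (cos_pi (Complex (of_int m) y))"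
proof -
  have "sin (pi * of_int m) = 0" by (simp add: sin_int_times_real mult.commute)
  then have "norm (cos_pi (Complex (of_int m) y)) = cosh (pi * y)"
    using norm_cos_eq_cosh_Im[of "complex_of_real pi * Complex (of_int m) y"] by simp
  then show ?thesis using exp_abs_le_cosh[of "pi * y"] by (simp add: abs_mult)
qed

lemma norm_cos_pi_horizontal:
  assumes "1 \<le> \<bar>y\<bar>"
  shows "exp (pi * \<bar>y\<bar>) / 4 \<le> norm (cos_pi (Complex x y))"
proof -
  have "1 \<le> \<bar>pi * y\<bar>"
    using assms pi_ge_two mult_mono[of 1 pi 1 "\<bar>y\<bar>"] by (simp add: abs_mult)
  then have "exp (pi * \<bar>y\<bar>) / 4 \<le> \<bar>sinh (pi * y)\<bar>"
    using exp_abs_le_abs_sinh[of "pi * y"] by (simp add: abs_mult)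
  also have "\<dots> \<le> norm (cos_pi (Complex x y))"
    using abs_sinh_Im_le_norm_cos[of "complex_of_real pi * Complex x y"] by simp
  finally show ?thesis .
qed

section \<open>Zeros of the cosine and residues\<close>

definition half_int :: "nat \<Rightarrow> complex" where
  "half_int n = complex_of_real (real n - 1/2)"

lemma cos_pi_eq_0_iff: "cos_pi w = 0 \<longleftrightarrow> (\<exists>k::int. w = of_real (of_int k + 1/2))"
proof
  assume "cos_pi w = 0"
  then obtain k :: int where "complex_of_real pi * w = of_real (of_int k * pi) + of_real pi / 2"
    by (auto simp: cos_eq_0)
  then have "complex_of_real pi * w = complex_of_real pi * of_real (of_int k + 1/2)"
    by (simp add: algebra_simps)
  then show "\<exists>k::int. w = of_real (of_int k + 1/2)" by auto
next
  assume "\<exists>k::int. w = of_real (of_int k + 1/2)"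
  then obtain k :: int where "w = of_real (of_int k + 1/2)" ..
  then have "complex_of_real pi * w = of_real (of_int k * pi) + of_real pi / 2"
    by (simp add: algebra_simps)
  then show "cos_pi w = 0" by (auto simp: cos_eq_0)
qed

lemma cos_pi_eq_0_imp_Im: "cos_pi w = 0 \<Longrightarrow> Im w = 0"
  by (auto simp: cos_pi_eq_0_iff)

lemma cos_pi_Complex_int_neq_0: "cos_pi (Complex (of_int m) y) \<noteq> 0"
proof
  assume "cos_pi (Complex (of_int m) y) = 0"
  then obtain k :: int where "Complex (of_int m) y = of_real (of_int k + 1/2)"
    by (auto simp: cos_pi_eq_0_iff)
  then have "real_of_int (2 * m) = of_int (2 * k + 1)" by (simp add: complex_eq_iff)
  then have "2 * m = 2 * k + 1" by (simp only: of_int_eq_iff)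
  then show False by presburger
qed

lemma cos_pi_half_int [simp]: "cos_pi (half_int n) = 0"
  unfolding cos_pi_eq_0_iff half_int_def by (auto intro!: exI[of _ "int n - 1"])

lemma cos_pi_minus_half_int [simp]: "cos_pi (- half_int n) = 0"
  using cos_pi_half_int[of n] by (simp del: cos_pi_half_int)

lemma sin_pi_half_int: "sin (complex_of_real pi * half_int n) = - ((-1) ^ n)"
proof -
  have "complex_of_real pi * half_int n = of_real (real n * pi - pi/2)"
    by (simp add: half_int_def algebra_simps)
  then show ?thesis by (simp only: sin_of_real) (simp add: sin_diff)
qed

lemma residue_div_simple_zero:
  assumes "open S" "c \<in> S" and g: "g holomorphic_on S" and f: "f holomorphic_on S"
    and f': "(f has_field_derivative f') (at c)" "f' \<noteq> 0"
    and zero: "f c = 0" "\<And>w. w \<in> S - {c} \<Longrightarrow> f w \<noteq> 0"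
  shows "residue (\<lambda>w. g w / f w) c = g c / f'"
proof (rule residue_simple'[OF assms(1,2)])
  show "(\<lambda>w. g w / f w) holomorphic_on S - {c}"
    using zero by (intro holomorphic_intros holomorphic_on_subset[OF g] holomorphic_on_subset[OF f]) auto
  have "((\<lambda>w. f w / (w - c)) \<longlongrightarrow> f') (at c)"
    using f' zero by (simp add: has_field_derivative_iff)
  then have "((\<lambda>w. g w * inverse (f w / (w - c))) \<longlongrightarrow> g c * inverse f') (at c)"
    using holomorphic_on_imp_continuous_on[OF g] assms(1,2) f'(2)
    by (intro tendsto_intros) (auto simp: continuous_on_eq_continuous_at isCont_def)
  then show "((\<lambda>w. g w / f w * (w - c)) \<longlongrightarrow> g c / f') (at c)"
    by (simp add: field_simps)
qed

definition over_z :: "(complex \<Rightarrow> complex) \<Rightarrow> complex \<Rightarrow> complex" where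
  "over_z \<Phi> w = \<Phi> w / w"

definition alt_coeff :: "(complex \<Rightarrow> complex) \<Rightarrow> nat \<Rightarrow> complex" where
  "alt_coeff \<Phi> n = (-1) ^ n * over_z \<Phi> (half_int n)"

lemma over_z_holomorphic:
  "\<Phi> holomorphic_on right_half_plane \<Longrightarrow> over_z \<Phi> holomorphic_on right_half_plane"
  unfolding over_z_def by (intro holomorphic_intros) (auto simp: right_half_plane_def)

lemma over_z_div_cos_pi_holomorphic:
  assumes "\<Phi> holomorphic_on right_half_plane" "A \<subseteq> right_half_plane"
    and "\<And>w. w \<in> A \<Longrightarrow> cos_pi w \<noteq> 0"
  shows "(\<lambda>w. over_z \<Phi> w / cos_pi w) holomorphic_on A"
  using assms by (intro holomorphic_intros holomorphic_on_subset[OF over_z_holomorphic]) auto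

lemma residue_over_z_div_cos_pi:
  assumes holo: "\<Phi> holomorphic_on right_half_plane" and n: "n \<ge> 1"
  shows "residue (\<lambda>w. over_z \<Phi> w / cos_pi w) (half_int n) = alt_coeff \<Phi> n / pi"
proof -
  let ?S = "ball (half_int n) (1/2)"
  have "?S \<subseteq> right_half_plane"
  proof
    fix w assume "w \<in> ?S"
    then have "\<bar>Re w - (real n - 1/2)\<bar> < 1/2"
      using abs_Re_le_cmod[of "w - half_int n"] by (simp add: half_int_def dist_norm norm_minus_commute)
    moreover have "real n \<ge> 1" using n by simp
    ultimately show "w \<in> right_half_plane" unfolding right_half_plane_def mem_Collect_eq by arith
  qed
  then have "over_z \<Phi> holomorphic_on ?S"
    using over_z_holomorphic[OF holo] by (rule holomorphic_on_subset[rotated])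
  moreover have "cos_pi w \<noteq> 0" if "w \<in> ?S - {half_int n}" for w
  proof
    assume "cos_pi w = 0"
    then obtain k :: int where "w = of_real (of_int k + 1/2)" by (auto simp: cos_pi_eq_0_iff)
    then have "w - half_int n = of_int (k + 1 - int n)" by (simp add: half_int_def)
    with that have "\<bar>real_of_int (k + 1 - int n)\<bar> < 1/2" "k + 1 - int n \<noteq> 0"
      by (auto simp: dist_norm norm_minus_commute simp del: of_int_diff)
    then show False by linarith
  qed
  moreover have "((\<lambda>w. cos_pi w) has_field_derivative - sin (complex_of_real pi * half_int n) * pi)
      (at (half_int n))"
    by (auto intro!: derivative_eq_intros)
  ultimately have "residue (\<lambda>w. over_z \<Phi> w / cos_pi w) (half_int n)
      = over_z \<Phi> (half_int n) / (- sin (complex_of_real pi * half_int n) * pi)"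
    by (intro residue_div_simple_zero) (auto intro!: holomorphic_intros simp: sin_pi_half_int)
  also have "\<dots> = alt_coeff \<Phi> n / pi"
    by (simp add: alt_coeff_def sin_pi_half_int field_simps)
  finally show ?thesis .
qed

section \<open>Integration around a rectangle\<close>

lemma path_image_rectpath_Complex:
  assumes "a \<le> b" "c \<le> d"
  shows "path_image (rectpath (Complex a c) (Complex b d)) =
    {w. (Re w = a \<or> Re w = b) \<and> c \<le> Im w \<and> Im w \<le> d \<or> (Im w = c \<or> Im w = d) \<and> a \<le> Re w \<and> Re w \<le> b}"
  using assms by (auto simp: path_image_rectpath)

lemma cos_pi_neq_0_on_rectpath:
  fixes M M' :: nat
  assumes "M \<le> M'" "0 < T" "w \<in> path_image (rectpath (Complex (real M) (-T)) (Complex (real M') T))"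
  shows "cos_pi w \<noteq> 0"
proof
  assume w: "cos_pi w = 0"
  then have "Im w = 0" by (rule cos_pi_eq_0_imp_Im)
  with assms have "w = Complex (of_int (int M)) 0 \<or> w = Complex (of_int (int M')) 0"
    by (auto simp: path_image_rectpath_Complex complex_eq_iff)
  with w show False using cos_pi_Complex_int_neq_0 by blast
qed

lemma cos_pi_eq_0_imp_half_int:
  assumes "cos_pi w = 0" "real M - 1/4 < Re w" "Re w < real M' + 1/4"
  shows "w \<in> half_int ` {M<..M'}"
proof -
  obtain k :: int where k: "w = of_real (of_int k + 1/2)"
    using assms(1) by (auto simp: cos_pi_eq_0_iff)
  with assms(2,3) have "int M \<le> k" "k < int M'" by auto
  then have "w = half_int (nat k + 1)" "nat k + 1 \<in> {M<..M'}"
    by (auto simp: k half_int_def)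
  then show ?thesis by blast
qed

lemma contour_integral_rectpath_over_z_div_cos_pi:
  assumes holo: "\<Phi> holomorphic_on right_half_plane" and M: "1 \<le> M" "M < M'" and T: "0 < T"
  shows "contour_integral (rectpath (Complex (real M) (-T)) (Complex (real M') T))
           (\<lambda>w. over_z \<Phi> w / cos_pi w) = 2 * \<i> * (\<Sum>n\<in>{M<..M'}. alt_coeff \<Phi> n)"
proof -
  define a1 where "a1 = Complex (real M) (-T)"
  define a3 where "a3 = Complex (real M') T"
  define S where "S = box (Complex (real M - 1/4) (-T-1)) (Complex (real M' + 1/4) (T+1))"
  define poles where "poles = half_int ` {M<..M'}"
  have corners: "Re a1 \<le> Re a3" "Im a1 \<le> Im a3" using M T by (auto simp: a1_def a3_def)
  have "S \<subseteq> right_half_plane"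
    using M by (auto simp: S_def in_box_complex_iff right_half_plane_def)
  moreover have "cos_pi w \<noteq> 0" if "w \<in> S - poles" for w
    using that cos_pi_eq_0_imp_half_int[of w M M'] by (auto simp: S_def poles_def in_box_complex_iff)
  ultimately have holo_S: "(\<lambda>w. over_z \<Phi> w / cos_pi w) holomorphic_on S - poles"
    by (intro over_z_div_cos_pi_holomorphic holo) auto
  have "path_image (rectpath a1 a3) \<subseteq> S"
    using M T by (auto simp: a1_def a3_def path_image_rectpath_Complex S_def in_box_complex_iff)
  moreover have "path_image (rectpath a1 a3) \<inter> poles = {}"
    using cos_pi_neq_0_on_rectpath[of M M' T] M T unfolding poles_def a1_def a3_def
    by (force simp del: cos_pi_half_int intro: cos_pi_half_int)
  ultimately have image: "path_image (rectpath a1 a3) \<subseteq> S - poles" by blast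
  have outside: "\<forall>z. z \<notin> S \<longrightarrow> winding_number (rectpath a1 a3) z = 0"
  proof (intro allI impI)
    fix z assume "z \<notin> S"
    then have "z \<notin> cbox a1 a3" using M T
      by (auto simp: S_def a1_def a3_def in_box_complex_iff in_cbox_complex_iff)
    then show "winding_number (rectpath a1 a3) z = 0"
      using corners by (intro winding_number_rectpath_outside) auto
  qed
  have "contour_integral (rectpath a1 a3) (\<lambda>w. over_z \<Phi> w / cos_pi w) = 2 * pi * \<i> *
      (\<Sum>p\<in>poles. winding_number (rectpath a1 a3) p * residue (\<lambda>w. over_z \<Phi> w / cos_pi w) p)"
    by (rule Residue_theorem[OF _ _ _ holo_S _ _ image outside])
       (auto simp: S_def poles_def intro: convex_connected)
  also have "\<dots> = 2 * pi * \<i> * (\<Sum>n\<in>{M<..M'}. alt_coeff \<Phi> n / pi)"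
  proof -
    have "winding_number (rectpath a1 a3) (half_int n) = 1" if "n \<in> {M<..M'}" for n
      using that T
      by (intro winding_number_rectpath) (auto simp: a1_def a3_def half_int_def in_box_complex_iff)
    moreover have "inj_on half_int {M<..M'}" by (auto simp: inj_on_def half_int_def)
    ultimately show ?thesis
      using M by (auto simp: poles_def sum.reindex residue_over_z_div_cos_pi[OF holo] intro!: sum.cong)
  qed
  also have "\<dots> = 2 * \<i> * (\<Sum>n\<in>{M<..M'}. alt_coeff \<Phi> n)"
    by (simp add: sum_divide_distrib[symmetric])
  finally show ?thesis unfolding a1_def a3_def .
qed

lemma contour_integral_rectpath_sides:
  assumes "continuous_on (path_image (rectpath a1 a3)) f"
  shows "contour_integral (rectpath a1 a3) f =
     contour_integral (linepath a1 (Complex (Re a3) (Im a1))) f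
     + contour_integral (linepath (Complex (Re a3) (Im a1)) a3) f
     - contour_integral (linepath (Complex (Re a1) (Im a3)) a3) f
     - contour_integral (linepath a1 (Complex (Re a1) (Im a3))) f"
proof -
  define a2 where "a2 = Complex (Re a3) (Im a1)"
  define a4 where "a4 = Complex (Re a1) (Im a3)"
  have path: "rectpath a1 a3 = linepath a1 a2 +++ linepath a2 a3 +++ linepath a3 a4 +++ linepath a4 a1"
    by (simp add: rectpath_def Let_def a2_def a4_def)
  have image: "path_image (rectpath a1 a3) =
      closed_segment a1 a2 \<union> closed_segment a2 a3 \<union> closed_segment a3 a4 \<union> closed_segment a4 a1"
    unfolding path by (simp add: path_image_join Un_assoc)
  have cont: "continuous_on (closed_segment a1 a2) f" "continuous_on (closed_segment a2 a3) f"
    "continuous_on (closed_segment a3 a4) f" "continuous_on (closed_segment a4 a1) f"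
    by (auto intro: continuous_on_subset[OF assms] simp: image)
  then have "contour_integral (rectpath a1 a3) f = contour_integral (linepath a1 a2) f
      + contour_integral (linepath a2 a3) f + contour_integral (linepath a3 a4) f
      + contour_integral (linepath a4 a1) f"
    unfolding path
    by (simp add: contour_integrable_continuous_linepath contour_integrable_joinI valid_path_join)
  also have "contour_integral (linepath a3 a4) f = - contour_integral (linepath a4 a3) f"
    using cont(3) by (rule contour_integral_reverse_linepath)
  also have "contour_integral (linepath a4 a1) f = - contour_integral (linepath a1 a4) f"
    using cont(4) by (rule contour_integral_reverse_linepath)
  finally show ?thesis unfolding a2_def a4_def by simp
qed

lemma contour_integral_linepath_same_Im:
  assumes "Im z = c" "Im z' = c" "Re z = a" "Re z' = b" "a < b"
  shows "contour_integral (linepath z z') f = integral {a..b} (\<lambda>x. f (Complex x c))"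
proof -
  have zz': "z = Complex a c" "z' = Complex b c"
    using assms by (auto simp: complex_eq_iff)
  have "contour_integral (linepath z z') f = (z' - z) * integral {0..1} (\<lambda>x. f (linepath z z' x))"
    by (simp add: contour_integral_integral)
  also have "z' - z = of_real (b - a)"
    by (simp add: zz' Complex_eq algebra_simps)
  also have "integral {0..1} (\<lambda>x. f (linepath z z' x)) =
             integral {0..(b - a) / (b - a)} (\<lambda>x. f (Complex (a + (b - a) * x) c))"
    using \<open>a < b\<close> by (simp add: linepath_def Complex_eq scaleR_conv_of_real algebra_simps zz')
  also have "{0..(b - a) / (b - a)} = (\<lambda>x. x / (b - a)) ` {0..b - a}"
    using \<open>a < b\<close> by simp
  also have "integral \<dots> (\<lambda>x. f (Complex (a + (b - a) * x) c)) =
             integral {a - a..b - a} (\<lambda>x. f (Complex (x + a) c)) / of_real (b - a)"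
    using \<open>a < b\<close> by (subst integral_stretch_real) (auto simp: scaleR_conv_of_real add_ac)
  also have "\<dots> = integral {a..b} (\<lambda>x. f (Complex x c)) / of_real (b - a)"
    by (subst integral_shift_real_ivl) (rule refl)
  finally show ?thesis
    using \<open>a < b\<close> by simp
qed

lemma norm_integral_le_nn_integral:
  fixes f :: "real \<Rightarrow> 'a::euclidean_space"
  assumes "continuous_on {a..b} f" "continuous_on {a..b} G"
    and "\<And>x. x \<in> {a..b} \<Longrightarrow> norm (f x) \<le> c * G x" "\<And>x. 0 \<le> G x" "0 \<le> c"
  shows "ennreal (norm (integral {a..b} f)) \<le> ennreal c * (\<integral>\<^sup>+ x \<in> {a..b}. ennreal (G x) \<partial>lborel)"
proof -
  have G: "(G has_integral integral {a..b} G) {a..b}"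
    using assms(2) by (intro integrable_integral integrable_continuous_interval)
  have "norm (integral {a..b} f) \<le> integral {a..b} (\<lambda>x. c * G x)"
    using assms
    by (intro integral_norm_bound_integral integrable_continuous_interval continuous_intros) auto
  also have "\<dots> = c * integral {a..b} G" by simp
  finally have "ennreal (norm (integral {a..b} f)) \<le> ennreal (c * integral {a..b} G)"
    by (rule ennreal_leI)
  also have "\<dots> = ennreal c * ennreal (integral {a..b} G)"
    using has_integral_nonneg[OF G assms(4)] assms(5) by (simp add: ennreal_mult)
  also have "ennreal (integral {a..b} G) = (\<integral>\<^sup>+ x. ennreal (indicator {a..b} x * G x) \<partial>lborel)"
    using nn_integral_has_integral_lebesgue[OF _ G] assms(4) by simp
  also have "\<dots> = (\<integral>\<^sup>+ x \<in> {a..b}. ennreal (G x) \<partial>lborel)"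
    by (intro nn_integral_cong) (simp add: indicator_def)
  finally show ?thesis .
qed

lemma continuous_on_over_z_Complex:
  assumes "\<Phi> holomorphic_on right_half_plane" "\<And>t. t \<in> A \<Longrightarrow> 0 < Re (p t)" "continuous_on A p"
  shows "continuous_on A (\<lambda>t. over_z \<Phi> (p t))"
  by (rule continuous_on_compose2[OF holomorphic_on_imp_continuous_on[OF over_z_holomorphic[OF assms(1)]]
        assms(3)])
     (use assms(2) in \<open>auto simp: right_half_plane_def\<close>)

lemma norm_contour_integral_vertical_side:
  assumes holo: "\<Phi> holomorphic_on right_half_plane" and "1 \<le> m" "0 < T"
  shows "ennreal (norm (contour_integral (linepath (Complex (real m) (-T)) (Complex (real m) T))
            (\<lambda>w. over_z \<Phi> w / cos_pi w))) \<le> 2 * vert_int \<Phi> (real m)"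
proof -
  define G where "G y = norm (over_z \<Phi> (Complex (real m) y)) * exp (- pi * \<bar>y\<bar>)" for y
  have cos_ne: "cos_pi (Complex (real m) y) \<noteq> 0" for y
    using cos_pi_Complex_int_neq_0[of "int m" y] by simp
  have cont: "continuous_on {-T..T} (\<lambda>y. over_z \<Phi> (Complex (real m) y))"
    using assms by (intro continuous_on_over_z_Complex continuous_intros) auto
  have cont_G: "continuous_on {-T..T} G"
    unfolding G_def by (intro continuous_intros cont)
  have "norm (over_z \<Phi> (Complex (real m) y) / cos_pi (Complex (real m) y)) \<le> 2 * G y" for y
  proof -
    have "norm (over_z \<Phi> (Complex (real m) y) / cos_pi (Complex (real m) y))
        \<le> norm (over_z \<Phi> (Complex (real m) y)) / (exp (pi * \<bar>y\<bar>) / 2)"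
      unfolding norm_divide
      using norm_cos_pi_vertical[of y "int m"] cos_ne[of y] by (intro divide_left_mono) auto
    then show ?thesis by (simp add: G_def exp_minus field_simps)
  qed
  then have "ennreal (norm (integral {-T..T}
        (\<lambda>y. over_z \<Phi> (Complex (real m) y) / cos_pi (Complex (real m) y))))
      \<le> ennreal 2 * (\<integral>\<^sup>+ y \<in> {-T..T}. ennreal (G y) \<partial>lborel)"
    by (intro norm_integral_le_nn_integral continuous_intros cont cont_G) (auto simp: G_def cos_ne)
  also have "(\<integral>\<^sup>+ y \<in> {-T..T}. ennreal (G y) \<partial>lborel) \<le> vert_int \<Phi> (real m)"
    unfolding vert_int_def G_def over_z_def
    by (intro nn_integral_mono) (auto simp: indicator_def)
  finally show ?thesis
    using \<open>0 < T\<close> by (simp add: contour_integral_linepath_same_Re norm_mult mult_left_mono)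
qed

lemma norm_contour_integral_horizontal_side:
  assumes holo: "\<Phi> holomorphic_on right_half_plane" and "0 < a" "a < b" "1 \<le> \<bar>y\<bar>"
  shows "ennreal (norm (contour_integral (linepath (Complex a y) (Complex b y))
            (\<lambda>w. over_z \<Phi> w / cos_pi w))) \<le> ennreal (4 * exp (- pi * \<bar>y\<bar>)) * horiz_int \<Phi> a b y"
proof -
  have cos_ne: "cos_pi (Complex x y) \<noteq> 0" for x
    using norm_cos_pi_horizontal[OF \<open>1 \<le> \<bar>y\<bar>\<close>, of x] by (auto simp del: norm_eq_zero)
  have cont: "continuous_on {a..b} (\<lambda>x. over_z \<Phi> (Complex x y))"
    using assms by (intro continuous_on_over_z_Complex continuous_intros) auto
  have "norm (over_z \<Phi> (Complex x y) / cos_pi (Complex x y))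
      \<le> 4 * exp (- pi * \<bar>y\<bar>) * norm (over_z \<Phi> (Complex x y))" for x
  proof -
    have "norm (over_z \<Phi> (Complex x y) / cos_pi (Complex x y))
        \<le> norm (over_z \<Phi> (Complex x y)) / (exp (pi * \<bar>y\<bar>) / 4)"
      unfolding norm_divide
      using norm_cos_pi_horizontal[OF \<open>1 \<le> \<bar>y\<bar>\<close>, of x] cos_ne[of x] by (intro divide_left_mono) auto
    then show ?thesis by (simp add: exp_minus field_simps)
  qed
  then have "ennreal (norm (integral {a..b} (\<lambda>x. over_z \<Phi> (Complex x y) / cos_pi (Complex x y))))
      \<le> ennreal (4 * exp (- pi * \<bar>y\<bar>))
         * (\<integral>\<^sup>+ x \<in> {a..b}. ennreal (norm (over_z \<Phi> (Complex x y))) \<partial>lborel)"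
    by (intro norm_integral_le_nn_integral continuous_intros cont) (auto simp: cos_ne)
  then show ?thesis
    using \<open>a < b\<close> by (simp add: contour_integral_linepath_same_Im horiz_int_def over_z_def)
qed

section \<open>Convergence of the alternating series\<close>

lemma norm_sum_alt_coeff_le_sides:
  assumes holo: "\<Phi> holomorphic_on right_half_plane" and M: "1 \<le> M" "M < M'" and T: "1 \<le> T"
  shows "ennreal (norm (\<Sum>n\<in>{M<..M'}. alt_coeff \<Phi> n))
     \<le> vert_int \<Phi> (real M) + vert_int \<Phi> (real M')
       + 2 * (ennreal (exp (- pi * \<bar>-T\<bar>)) * horiz_int \<Phi> (real M) (real M') (-T))
       + 2 * (ennreal (exp (- pi * \<bar>T\<bar>)) * horiz_int \<Phi> (real M) (real M') T)"
proof -
  let ?h = "\<lambda>w. over_z \<Phi> w / cos_pi w"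
  let ?S = "\<Sum>n\<in>{M<..M'}. alt_coeff \<Phi> n"
  define bottom where
    "bottom = contour_integral (linepath (Complex (real M) (-T)) (Complex (real M') (-T))) ?h"
  define right where
    "right = contour_integral (linepath (Complex (real M') (-T)) (Complex (real M') T)) ?h"
  define top where
    "top = contour_integral (linepath (Complex (real M) T) (Complex (real M') T)) ?h"
  define left where
    "left = contour_integral (linepath (Complex (real M) (-T)) (Complex (real M) T)) ?h"
  have "continuous_on (path_image (rectpath (Complex (real M) (-T)) (Complex (real M') T))) ?h"
    using M T cos_pi_neq_0_on_rectpath[of M M' T]
    by (intro holomorphic_on_imp_continuous_on over_z_div_cos_pi_holomorphic holo)
       (auto simp: path_image_rectpath_Complex right_half_plane_def)
  then have "2 * \<i> * ?S = bottom + right - top - left"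
    using contour_integral_rectpath_sides contour_integral_rectpath_over_z_div_cos_pi[OF holo M, of T] T
    by (simp add: bottom_def right_def top_def left_def)
  then have "2 * norm ?S = norm (bottom + right - top - left)"
    by (metis norm_mult norm_ii norm_numeral mult.right_neutral)
  also have "\<dots> \<le> norm bottom + norm right + norm top + norm left"
    by (smt (verit) norm_triangle_ineq norm_triangle_ineq4)
  finally have "ennreal (2 * norm ?S) \<le> ennreal (norm bottom + norm right + norm top + norm left)"
    by (rule ennreal_leI)
  then have "2 * ennreal (norm ?S)
      \<le> ennreal (norm bottom) + ennreal (norm right) + ennreal (norm top) + ennreal (norm left)"
    by (simp add: ennreal_mult)
  also have "\<dots> \<le> ennreal (4 * exp (- pi * \<bar>-T\<bar>)) * horiz_int \<Phi> (real M) (real M') (-T)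
      + 2 * vert_int \<Phi> (real M')
      + ennreal (4 * exp (- pi * \<bar>T\<bar>)) * horiz_int \<Phi> (real M) (real M') T
      + 2 * vert_int \<Phi> (real M)"
    unfolding bottom_def right_def top_def left_def using M T
    by (intro add_mono norm_contour_integral_vertical_side norm_contour_integral_horizontal_side holo)
       auto
  also have "\<dots> = 2 * (vert_int \<Phi> (real M) + vert_int \<Phi> (real M')
       + 2 * (ennreal (exp (- pi * \<bar>-T\<bar>)) * horiz_int \<Phi> (real M) (real M') (-T))
       + 2 * (ennreal (exp (- pi * \<bar>T\<bar>)) * horiz_int \<Phi> (real M) (real M') T))"
    by (simp add: ennreal_mult distrib_left add_ac flip: mult.assoc)
  finally show ?thesis by (rule ennreal_mult_le_mult_iff[THEN iffD1, rotated 2]) simp_all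
qed

lemma norm_sum_alt_coeff_le_vert_int:
  assumes holo: "\<Phi> holomorphic_on right_half_plane" and M: "1 \<le> M" "M < M'"
    and top: "((\<lambda>y. ennreal (exp (- pi * \<bar>y\<bar>)) * horiz_int \<Phi> (real M) (real M') y) \<longlongrightarrow> 0) at_top"
    and bot: "((\<lambda>y. ennreal (exp (- pi * \<bar>y\<bar>)) * horiz_int \<Phi> (real M) (real M') y) \<longlongrightarrow> 0) at_bot"
  shows "ennreal (norm (\<Sum>n\<in>{M<..M'}. alt_coeff \<Phi> n)) \<le> vert_int \<Phi> (real M) + vert_int \<Phi> (real M')"
proof (rule tendsto_le[OF trivial_limit_at_top_linorder])
  let ?V = "vert_int \<Phi> (real M) + vert_int \<Phi> (real M')"
  let ?H = "\<lambda>y. ennreal (exp (- pi * \<bar>y\<bar>)) * horiz_int \<Phi> (real M) (real M') y"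
  have "((\<lambda>T. ?H (-T)) \<longlongrightarrow> 0) at_top"
    using bot by (simp add: filterlim_at_bot_mirror)
  then have "((\<lambda>T. ?V + 2 * ?H (-T) + 2 * ?H T) \<longlongrightarrow> ?V + 2 * 0 + 2 * 0) at_top"
    by (intro tendsto_add tendsto_const ennreal_tendsto_cmult top) auto
  then show "((\<lambda>T. ?V + 2 * ?H (-T) + 2 * ?H T) \<longlongrightarrow> ?V) at_top"
    by simp
  show "\<forall>\<^sub>F T in at_top. ennreal (norm (\<Sum>n\<in>{M<..M'}. alt_coeff \<Phi> n)) \<le> ?V + 2 * ?H (-T) + 2 * ?H T"
    using eventually_ge_at_top[of 1] by eventually_elim (rule norm_sum_alt_coeff_le_sides[OF holo M])
qed simp

lemma summable_if_norm_block_le: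
  fixes f :: "nat \<Rightarrow> 'a::banach" and e :: "nat \<Rightarrow> ennreal"
  assumes block: "\<And>m n. N \<le> m \<Longrightarrow> m < n \<Longrightarrow> ennreal (norm (\<Sum>k\<in>{m..<n}. f k)) \<le> e m + e n"
    and "e \<longlonglongrightarrow> 0"
  shows "summable f"
  unfolding summable_Cauchy
proof (intro allI impI)
  fix \<epsilon> :: real assume "0 < \<epsilon>"
  then have "\<forall>\<^sub>F m in sequentially. e m < ennreal (\<epsilon> / 3)"
    using \<open>e \<longlonglongrightarrow> 0\<close> by (intro order_tendstoD(2)) auto
  then obtain N' where N': "\<And>m. N' \<le> m \<Longrightarrow> e m \<le> ennreal (\<epsilon> / 3)"
    by (metis eventually_sequentially less_imp_le)
  have "norm (\<Sum>k\<in>{m..<n}. f k) < \<epsilon>" if "max N N' \<le> m" for m n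
  proof (cases "m < n")
    case True
    with that have "ennreal (norm (\<Sum>k\<in>{m..<n}. f k)) \<le> ennreal (\<epsilon> / 3) + ennreal (\<epsilon> / 3)"
      by (intro order_trans[OF block] add_mono N') auto
    then have "norm (\<Sum>k\<in>{m..<n}. f k) \<le> 2 * \<epsilon> / 3"
      using \<open>0 < \<epsilon>\<close> by (simp flip: ennreal_plus)
    then show ?thesis
      using \<open>0 < \<epsilon>\<close> by linarith
  qed (use \<open>0 < \<epsilon>\<close> in auto)
  then show "\<exists>N. \<forall>m\<ge>N. \<forall>n. norm (sum f {m..<n}) < \<epsilon>" by blast
qed

lemma summable_alt_coeff:
  assumes holo: "\<Phi> holomorphic_on right_half_plane"
    and cond_a: "\<And>a b. 0 < a \<Longrightarrow> a < b \<Longrightarrow>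
        ((\<lambda>y. ennreal (exp (- pi * \<bar>y\<bar>)) * horiz_int \<Phi> a b y) \<longlongrightarrow> 0) at_top \<and>
        ((\<lambda>y. ennreal (exp (- pi * \<bar>y\<bar>)) * horiz_int \<Phi> a b y) \<longlongrightarrow> 0) at_bot"
    and cond_c: "(vert_int \<Phi> \<longlongrightarrow> 0) at_top"
  shows "summable (\<lambda>k. alt_coeff \<Phi> (Suc k))"
proof (rule summable_if_norm_block_le)
  fix m n :: nat assume mn: "1 \<le> m" "m < n"
  have "(\<Sum>k\<in>{m<..n}. alt_coeff \<Phi> k) = (\<Sum>k\<in>{m..<n}. alt_coeff \<Phi> (Suc k))"
    unfolding atLeastSucAtMost_greaterThanAtMost[symmetric] atLeastLessThanSuc_atLeastAtMost[symmetric]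
    by (rule sum.shift_bounds_Suc_ivl)
  moreover have "ennreal (norm (\<Sum>k\<in>{m<..n}. alt_coeff \<Phi> k)) \<le> vert_int \<Phi> (real m) + vert_int \<Phi> (real n)"
    using mn cond_a[of "real m" "real n"] by (intro norm_sum_alt_coeff_le_vert_int holo) auto
  ultimately show "ennreal (norm (\<Sum>k\<in>{m..<n}. alt_coeff \<Phi> (Suc k)))
      \<le> vert_int \<Phi> (real m) + vert_int \<Phi> (real n)"
    by simp
next
  show "(\<lambda>m. vert_int \<Phi> (real m)) \<longlonglongrightarrow> 0"
    using cond_c filterlim_real_sequentially by (rule filterlim_compose)
qed

section \<open>The entire partial sums and their uniform convergence\<close>

definition cos_pi_quot :: "complex \<Rightarrow> complex \<Rightarrow> complex" where
  "cos_pi_quot c z = (if z = c then deriv (\<lambda>w. cos_pi w) c else (cos_pi z - cos_pi c) / (z - c))"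

text \<open>The entire function that agrees with (cos pi z / pi) (-1)^n A(n - 1/2, Phi; z) away from
  the removable singularities at +-(n - 1/2).\<close>

definition K_term :: "(complex \<Rightarrow> complex) \<Rightarrow> nat \<Rightarrow> complex \<Rightarrow> complex" where
  "K_term \<Phi> n z = (-1) ^ n * \<Phi> (half_int n) / pi
     * (cos_pi_quot (half_int n) z - cos_pi_quot (- half_int n) z)"

definition K_partial :: "(complex \<Rightarrow> complex) \<Rightarrow> nat \<Rightarrow> complex \<Rightarrow> complex" where
  "K_partial \<Phi> N z = (\<Sum>n = 1..N. K_term \<Phi> n z)"

text \<open>Adding back the part that is only conditionally summable leaves a term of size O(n^-2)
  on compact sets.\<close>

definition K_term_reg :: "(complex \<Rightarrow> complex) \<Rightarrow> nat \<Rightarrow> complex \<Rightarrow> complex" where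
  "K_term_reg \<Phi> n z = K_term \<Phi> n z + 2 * cos_pi z / pi * alt_coeff \<Phi> n"

lemma cos_pi_quot_holomorphic: "cos_pi_quot c holomorphic_on UNIV"
  using pole_lemma_open[of "\<lambda>w. cos_pi w" UNIV c] unfolding cos_pi_quot_def
  by (auto intro: holomorphic_intros)

lemma cos_pi_quot_eq: "cos_pi c = 0 \<Longrightarrow> z \<noteq> c \<Longrightarrow> cos_pi_quot c z = cos_pi z / (z - c)"
  by (simp add: cos_pi_quot_def)

lemma K_partial_holomorphic: "K_partial \<Phi> N holomorphic_on UNIV"
  unfolding K_partial_def K_term_def by (intro holomorphic_intros cos_pi_quot_holomorphic)

lemma K_term_eq:
  assumes "z \<noteq> half_int n" "z \<noteq> - half_int n"
  shows "K_term \<Phi> n z = cos_pi z / pi * ((-1) ^ n * calA (real n - 1/2) \<Phi> z)"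
proof -
  have nz: "z - half_int n \<noteq> 0" "z + half_int n \<noteq> 0"
    using assms by (auto simp: add_eq_0_iff)
  have quot: "cos_pi_quot (half_int n) z = cos_pi z / (z - half_int n)"
    "cos_pi_quot (- half_int n) z = cos_pi z / (z + half_int n)"
    using assms by (simp_all add: cos_pi_quot_eq)
  have A: "calA (real n - 1/2) \<Phi> z
      = \<Phi> (half_int n) / (z - half_int n) - \<Phi> (half_int n) / (z + half_int n)"
    by (simp add: calA_def half_int_def)
  show ?thesis unfolding K_term_def quot A using nz by (simp add: field_simps)
qed

lemma K_partial_eq_partial_K:
  assumes "cos_pi z \<noteq> 0"
  shows "K_partial \<Phi> N z = partial_K \<Phi> N z"
proof -
  have "z \<noteq> half_int n" "z \<noteq> - half_int n" for n
    using assms cos_pi_half_int[of n] cos_pi_minus_half_int[of n] by auto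
  then show ?thesis
    by (simp add: K_partial_def partial_K_def K_term_eq sum_distrib_left)
qed

lemma K_term_reg_eq:
  assumes "1 \<le> n" "z \<noteq> half_int n" "z \<noteq> - half_int n"
  shows "K_term_reg \<Phi> n z = alt_coeff \<Phi> n / pi * cos_pi z * (2 * z^2 / (z^2 - half_int n ^ 2))"
proof -
  have "real n - 1/2 \<noteq> 0" using assms(1) by linarith
  then have nz: "z - half_int n \<noteq> 0" "z + half_int n \<noteq> 0" "half_int n \<noteq> 0"
    using assms(2,3) unfolding half_int_def of_real_eq_0_iff
    by (auto simp: eq_neg_iff_add_eq_0[symmetric] simp del: of_real_diff)
  then have "z^2 - half_int n ^ 2 \<noteq> 0"
    by (simp add: power2_eq_square square_diff_square_factored)
  have quot: "cos_pi_quot (half_int n) z = cos_pi z / (z - half_int n)"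
    "cos_pi_quot (- half_int n) z = cos_pi z / (z + half_int n)"
    using assms by (simp_all add: cos_pi_quot_eq)
  have \<Phi>: "\<Phi> (half_int n) = half_int n * over_z \<Phi> (half_int n)"
    using nz by (simp add: over_z_def)
  show ?thesis
    unfolding K_term_reg_def K_term_def alt_coeff_def quot \<Phi>
    using nz \<open>z^2 - half_int n ^ 2 \<noteq> 0\<close> by (simp add: field_simps power2_eq_square)
qed

lemma norm_quadratic_quot_le:
  fixes z :: complex
  assumes "1 \<le> n" "norm z \<le> R" "2 * R \<le> real n - 1/2"
  shows "norm (2 * z^2 / (z^2 - half_int n ^ 2)) \<le> 16 * R^2 / (real n)^2"
proof -
  define x where "x = real n - 1/2"
  have x: "0 < x" "real n \<le> 2 * x" using assms(1) by (auto simp: x_def)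
  have R: "0 \<le> R" "R \<le> x / 2"
    using assms(2,3) norm_ge_zero[of z] by (linarith, simp add: x_def field_simps)
  have "half_int n = of_real x" by (simp add: half_int_def x_def)
  then have "x^2 - (norm z)^2 \<le> norm (z^2 - half_int n ^ 2)"
    using norm_triangle_ineq2[of "half_int n ^ 2" "z^2"]
    by (simp add: norm_power norm_minus_commute flip: of_real_power)
  moreover have "(norm z)^2 \<le> (x / 2)^2"
    using assms(2) R by (intro power_mono) auto
  ultimately have D: "x^2 / 2 \<le> norm (z^2 - half_int n ^ 2)"
    by (simp add: power_divide) (use zero_le_power2[of "norm z"] in linarith)
  have "norm (2 * z^2 / (z^2 - half_int n ^ 2)) \<le> 2 * R^2 / (x^2 / 2)"
    unfolding norm_divide norm_mult norm_power
    using power_mono[OF assms(2), of 2] D x by (intro frac_le mult_left_mono) auto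
  also have "\<dots> = 4 * R^2 / x^2"
    using x by (simp add: field_simps)
  also have "\<dots> \<le> 16 * R^2 / (real n)^2"
  proof -
    have "(real n)^2 \<le> (2 * x)^2"
      using x by (intro power_mono) auto
    then have "4 * R^2 * (real n)^2 \<le> 4 * R^2 * (2 * x)^2"
      by (rule mult_left_mono) simp
    then show ?thesis
      using x assms(1) by (simp add: field_simps)
  qed
  finally show ?thesis .
qed

lemma K_partial_eq_K_term_reg:
  "K_partial \<Phi> N z = (\<Sum>k<N. K_term_reg \<Phi> (Suc k) z) - 2 * cos_pi z / pi * (\<Sum>k<N. alt_coeff \<Phi> (Suc k))"
  by (simp add: K_partial_def K_term_reg_def sum.distrib sum_distrib_left sum.atLeast1_atMost_eq)

lemma uniform_limit_K_term_reg:
  assumes B: "\<And>k. norm (alt_coeff \<Phi> (Suc k)) \<le> B" and "compact S"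
  shows "uniform_limit S (\<lambda>N z. \<Sum>k<N. K_term_reg \<Phi> (Suc k) z)
           (\<lambda>z. \<Sum>k. K_term_reg \<Phi> (Suc k) z) sequentially"
proof -
  obtain R where R: "1 \<le> R" "\<And>z. z \<in> S \<Longrightarrow> norm z \<le> R"
    using compact_imp_bounded[OF \<open>compact S\<close>]
    by (metis bounded_pos_less less_imp_le max.cobounded2 max.coboundedI1)
  have "continuous_on S (\<lambda>z. cos_pi z)" by (intro continuous_intros)
  then obtain C where C: "\<And>z. z \<in> S \<Longrightarrow> norm (cos_pi z) \<le> C"
    using compact_imp_bounded[OF compact_continuous_image[OF _ \<open>compact S\<close>]] by (force simp: bounded_iff)
  define K where "K = B / pi * C * (16 * R^2)"
  have "\<forall>\<^sub>F k in sequentially. \<forall>z\<in>S. norm (K_term_reg \<Phi> (Suc k) z) \<le> K * inverse (real (Suc k) ^ 2)"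
    unfolding eventually_sequentially
  proof (intro exI allI impI ballI)
    fix k z assume k: "nat \<lceil>2 * R\<rceil> \<le> k" and z: "z \<in> S"
    then have big: "2 * R \<le> real (Suc k) - 1/2" by linarith
    have "norm (half_int (Suc k)) = real k + 1/2"
      unfolding half_int_def norm_of_real by simp
    then have "norm z < norm (half_int (Suc k))"
      using R(1) R(2)[OF z] big by linarith
    then have "z \<noteq> half_int (Suc k)" "z \<noteq> - half_int (Suc k)" by auto
    then have "norm (K_term_reg \<Phi> (Suc k) z) = norm (alt_coeff \<Phi> (Suc k)) / pi * norm (cos_pi z)
        * norm (2 * z^2 / (z^2 - half_int (Suc k) ^ 2))"
      by (simp add: K_term_reg_eq norm_mult norm_divide)
    also have "\<dots> \<le> B / pi * C * (16 * R^2 / (real (Suc k))^2)"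
      using B[of k] C[OF z] norm_quadratic_quot_le[OF _ R(2)[OF z] big]
        order_trans[OF norm_ge_zero B[of k]] order_trans[OF norm_ge_zero C[OF z]]
      by (intro mult_mono divide_right_mono) auto
    finally show "norm (K_term_reg \<Phi> (Suc k) z) \<le> K * inverse (real (Suc k) ^ 2)"
      by (simp add: K_def divide_inverse)
  qed
  moreover have "summable (\<lambda>k. K * inverse (real (Suc k) ^ 2))"
    using inverse_power_summable[of 2, where 'a=real] summable_Suc_iff[of "\<lambda>n. inverse (real n ^ 2)"]
    by (intro summable_mult) simp
  ultimately show ?thesis by (rule Weierstrass_m_test_ev)
qed

lemma uniform_limit_K_partial:
  assumes "summable (\<lambda>k. alt_coeff \<Phi> (Suc k))" "compact S"
  shows "uniform_limit S (K_partial \<Phi>) (\<lambda>z. (\<Sum>k. K_term_reg \<Phi> (Suc k) z)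
           - 2 * cos_pi z / pi * (\<Sum>k. alt_coeff \<Phi> (Suc k))) sequentially"
proof -
  have "Bseq (\<lambda>k. alt_coeff \<Phi> (Suc k))"
    using summable_LIMSEQ_zero[OF assms(1)] by (intro convergent_imp_Bseq convergentI)
  then obtain B where B: "\<And>k. norm (alt_coeff \<Phi> (Suc k)) \<le> B"
    by (auto elim!: BseqE)
  have "uniform_limit S (\<lambda>N z. 2 * cos_pi z / pi * (\<Sum>k<N. alt_coeff \<Phi> (Suc k)))
      (\<lambda>z. 2 * cos_pi z / pi * (\<Sum>k. alt_coeff \<Phi> (Suc k))) sequentially"
    using summable_LIMSEQ[OF assms(1)]
    by (intro uniform_lim_mult uniform_limit_const compact_imp_bounded compact_continuous_image
          assms(2) continuous_intros) (auto simp: uniform_limit_iff tendsto_iff)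
  then show ?thesis
    unfolding K_partial_eq_K_term_reg[abs_def]
    by (intro uniform_limit_minus uniform_limit_K_term_reg[OF B assms(2)])
qed

theorem lemma3p3:
  fixes \<Phi> :: "complex \<Rightarrow> complex"
  assumes holo: "\<Phi> holomorphic_on right_half_plane"
    and cond_a: "\<And>a b. 0 < a \<Longrightarrow> a < b \<Longrightarrow>
        ((\<lambda>y. ennreal (exp (- pi * \<bar>y\<bar>)) * horiz_int \<Phi> a b y) \<longlongrightarrow> 0) at_top \<and>
        ((\<lambda>y. ennreal (exp (- pi * \<bar>y\<bar>)) * horiz_int \<Phi> a b y) \<longlongrightarrow> 0) at_bot"
    and cond_b: "\<And>\<eta>. 0 < \<eta> \<Longrightarrow> (SUP x\<in>{\<eta>..}. vert_int \<Phi> x) < \<infinity>"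
    and cond_c: "(vert_int \<Phi> \<longlongrightarrow> 0) at_top"
  shows "\<exists>F K. (\<forall>N. F N holomorphic_on UNIV \<and>
                    (\<forall>z. cos (complex_of_real pi * z) \<noteq> 0 \<longrightarrow> F N z = partial_K \<Phi> N z))
             \<and> K holomorphic_on UNIV
             \<and> (\<forall>S. compact S \<longrightarrow> uniform_limit S F K sequentially)"
proof -
  define K where "K z = (\<Sum>k. K_term_reg \<Phi> (Suc k) z)
     - 2 * cos_pi z / pi * (\<Sum>k. alt_coeff \<Phi> (Suc k))" for z
  have unif: "uniform_limit S (K_partial \<Phi>) K sequentially" if "compact S" for S
    unfolding K_def using summable_alt_coeff[OF holo cond_a cond_c] that by (rule uniform_limit_K_partial)
  have "K holomorphic_on UNIV"
    by (rule holomorphic_uniform_sequence[OF open_UNIV K_partial_holomorphic])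
       (auto intro!: exI[of _ 1] unif)
  then show ?thesis
    using K_partial_holomorphic K_partial_eq_partial_K unif by blast
qed

end
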